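(* Let $A\in\mathbb{R}^{n\times p}$ be an arbitrary matrix with $n<p$, and let $x^\circ\in\mathbb{R}^p$ be arbitrary. Then for each $q\in[0,2]$ there exists a non-zero vector $\tilde x\in\mathbb{R}^p$ with $A\tilde x=Ax^\circ$ and $$s_q(\tilde x)\ge\frac1{\pi e}\Big(1-\frac np\Big)^2 p.$$ Also, for $q\in(2,\infty]$ there exists a non-zero vector $\bar x\in\mathbb{R}^p$ with $A\bar x=Ax^\circ$ and $$s_q(\bar x)\ge\frac{\sqrt{\frac2{\pi e}}\,(p-n)}{1+\sqrt{16\log(2p)}}.$$
   Context: For $x\in\mathbb{R}^p\setminus\{0\}$ let $\pi_j(x):=|x_j|/\|x\|_1$. For $q\notin\{0,1,\infty\}$, $s_q(x):=(\|x\|_q/\|x\|_1)^{q/(1-q)}$; $s_0(x):=\|x\|_0$ (number of nonzero entries), $s_1(x):=\exp\big(-\sum_j\pi_j(x)\log\pi_j(x)\big)$, $s_\infty(x):=\|x\|_1/\|x\|_\infty$. *)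

theory Defs
  imports "HOL-Analysis.Analysis"
begin

definition l1norm :: "real^'p \<Rightarrow> real" where
  "l1norm x = (\<Sum>j\<in>UNIV. \<bar>x $ j\<bar>)"

definition lqnorm :: "real \<Rightarrow> real^'p \<Rightarrow> real" where
  "lqnorm q x = (\<Sum>j\<in>UNIV. \<bar>x $ j\<bar> powr q) powr (1 / q)"

definition linfnorm :: "real^'p \<Rightarrow> real" where
  "linfnorm x = Max (range (\<lambda>j. \<bar>x $ j\<bar>))"

definition l0norm :: "real^'p \<Rightarrow> nat" where
  "l0norm x = card {j. x $ j \<noteq> 0}"

definition piv :: "real^'p \<Rightarrow> 'p \<Rightarrow> real" where
  "piv x j = \<bar>x $ j\<bar> / l1norm x"

text \<open>Numerical sparsity s_q, q \<in> [0,\<infinity>] given as an extended real.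
  Convention 0 log 0 = 0 holds since ln 0 = 0 in Isabelle.\<close>
definition sq :: "ereal \<Rightarrow> real^'p \<Rightarrow> real" where
  "sq q x =
    (if q = 0 then real (l0norm x)
     else if q = 1 then exp (- (\<Sum>j\<in>UNIV. piv x j * ln (piv x j)))
     else if q = \<infinity> then l1norm x / linfnorm x
     else (lqnorm (real_of_ereal q) x / l1norm x)
             powr (real_of_ereal q / (1 - real_of_ereal q)))"

end

theory Submission
  imports Defs
begin

text \<open>Every s_q with q \<ge> 0 dominates s_\<infinity>(x) = \<parallel>x\<parallel>_1 / \<parallel>x\<parallel>_\<infinity>, which in turn is at least the
  number of coordinates where |x_j| attains \<parallel>x\<parallel>_\<infinity>. Starting from any non-zero solution of
  A x = A x\<degree>, one can enlarge this peak set: as long as it has fewer than p - n elements,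
  the kernel of A contains a non-zero y vanishing on it, and moving x along y until a
  further coordinate reaches the maximal modulus keeps \<parallel>x\<parallel>_\<infinity> fixed. Hence some solution
  has s_q \<ge> p - n, and both bounds of the theorem are at most p - n.\<close>

lemma abs_le_linfnorm: "\<bar>x $ j\<bar> \<le> linfnorm x"
  unfolding linfnorm_def by (rule Max_ge) auto

lemma linfnorm_eqI: "(\<And>j. \<bar>x $ j\<bar> \<le> M) \<Longrightarrow> \<bar>x $ k\<bar> = M \<Longrightarrow> linfnorm x = M"
  unfolding linfnorm_def by (rule Max_eqI) auto

lemma linfnorm_pos: "x \<noteq> 0 \<Longrightarrow> linfnorm x > 0"
proof -
  assume "x \<noteq> 0"
  then obtain j where "x $ j \<noteq> 0" by (auto simp: vec_eq_iff)
  thus ?thesis using abs_le_linfnorm[of x j] by linarith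
qed

lemma l1norm_pos: "x \<noteq> 0 \<Longrightarrow> l1norm x > 0"
proof -
  assume "x \<noteq> 0"
  then obtain j where j: "x $ j \<noteq> 0" by (auto simp: vec_eq_iff)
  have "\<bar>x $ j\<bar> \<le> l1norm x" unfolding l1norm_def by (rule member_le_sum) auto
  thus ?thesis using j by linarith
qed

definition peak_set :: "real^'p \<Rightarrow> 'p set" where
  "peak_set x = {j. \<bar>x $ j\<bar> = linfnorm x}"

lemma card_peak_set_le_l1norm_div_linfnorm:
  assumes "x \<noteq> 0"
  shows "real (card (peak_set x)) \<le> l1norm x / linfnorm x"
proof -
  have "real (card (peak_set x)) * linfnorm x = (\<Sum>j\<in>peak_set x. \<bar>x $ j\<bar>)"
    by (simp add: peak_set_def)
  also have "\<dots> \<le> l1norm x" unfolding l1norm_def by (rule sum_mono2) auto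
  finally show ?thesis using linfnorm_pos[OF assms] by (simp add: le_divide_eq)
qed

lemma l1norm_div_linfnorm_le_l0norm:
  assumes "x \<noteq> 0"
  shows "l1norm x / linfnorm x \<le> real (l0norm x)"
proof -
  define S where "S = {j. x $ j \<noteq> 0}"
  have "l1norm x = (\<Sum>j\<in>S. \<bar>x $ j\<bar>)"
    unfolding l1norm_def S_def by (rule sum.mono_neutral_right) auto
  also have "\<dots> \<le> (\<Sum>j\<in>S. linfnorm x)" by (rule sum_mono) (rule abs_le_linfnorm)
  also have "\<dots> = real (l0norm x) * linfnorm x" by (simp add: l0norm_def S_def)
  finally show ?thesis using linfnorm_pos[OF assms] by (simp add: divide_le_eq)
qed

lemma l1norm_div_linfnorm_le_entropy_sparsity:
  assumes "x \<noteq> 0"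
  shows "l1norm x / linfnorm x \<le> exp (- (\<Sum>j\<in>UNIV. piv x j * ln (piv x j)))"
proof -
  define L where "L = l1norm x"
  define m where "m = linfnorm x"
  have L: "L > 0" using l1norm_pos[OF assms] by (simp add: L_def)
  have m: "m > 0" using linfnorm_pos[OF assms] by (simp add: m_def)
  have piv_sum: "(\<Sum>j\<in>UNIV. piv x j) = 1"
    using L by (simp add: piv_def L_def l1norm_def flip: sum_divide_distrib)
  have "(\<Sum>j\<in>UNIV. piv x j * ln (piv x j)) \<le> (\<Sum>j\<in>UNIV. piv x j * ln (m / L))"
  proof (rule sum_mono)
    fix j
    show "piv x j * ln (piv x j) \<le> piv x j * ln (m / L)"
    proof (cases "x $ j = 0")
      case False
      hence "piv x j > 0" using L by (simp add: piv_def L_def)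
      moreover have "piv x j \<le> m / L"
        using abs_le_linfnorm[of x j] L by (simp add: piv_def L_def m_def divide_right_mono)
      ultimately show ?thesis by (simp add: mult_left_mono)
    qed (simp add: piv_def)
  qed
  also have "\<dots> = ln (m / L)" by (simp flip: sum_distrib_right add: piv_sum)
  finally have "ln (L / m) \<le> - (\<Sum>j\<in>UNIV. piv x j * ln (piv x j))"
    using L m by (simp add: ln_div)
  have "L / m = exp (ln (L / m))" using L m by simp
  also have "\<dots> \<le> exp (- (\<Sum>j\<in>UNIV. piv x j * ln (piv x j)))"
    using \<open>ln (L / m) \<le> _\<close> by (simp only: exp_le_cancel_iff)
  finally show ?thesis unfolding L_def m_def .
qed

lemma mult_powr_le_powr_of_le:
  fixes a m r :: real
  assumes "0 \<le> a" "a \<le> m" "r < 1"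
  shows "a * m powr (r - 1) \<le> a powr r"
proof (cases "a = 0")
  case False
  hence a: "a > 0" using assms(1) by simp
  have "a * m powr (r - 1) \<le> a * a powr (r - 1)"
    using assms a by (intro mult_left_mono powr_mono2') auto
  also have "\<dots> = a powr r" using a by (simp add: powr_mult_base)
  finally show ?thesis .
qed simp

lemma powr_le_mult_powr_of_le:
  fixes a m r :: real
  assumes "0 \<le> a" "a \<le> m" "r > 1"
  shows "a powr r \<le> a * m powr (r - 1)"
proof (cases "a = 0")
  case False
  hence a: "a > 0" using assms(1) by simp
  have "a powr r = a * a powr (r - 1)" using a by (simp add: powr_mult_base)
  also have "\<dots> \<le> a * m powr (r - 1)"
    using assms a by (intro mult_left_mono powr_mono2) auto
  finally show ?thesis .
qed (use assms in simp)

lemma l1norm_div_linfnorm_le_sq_real: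
  assumes "x \<noteq> 0" and "r > 0" and "r \<noteq> 1"
  shows "l1norm x / linfnorm x \<le> (lqnorm r x / l1norm x) powr (r / (1 - r))"
proof -
  define L where "L = l1norm x"
  define m where "m = linfnorm x"
  define S where "S = (\<Sum>j\<in>UNIV. \<bar>x $ j\<bar> powr r)"
  have L: "L > 0" using l1norm_pos[OF assms(1)] by (simp add: L_def)
  have m: "m > 0" using linfnorm_pos[OF assms(1)] by (simp add: m_def)
  have le_m: "\<And>j. \<bar>x $ j\<bar> \<le> m" using abs_le_linfnorm by (simp add: m_def)
  have L_sum: "L = (\<Sum>j\<in>UNIV. \<bar>x $ j\<bar>)" by (simp add: L_def l1norm_def)
  have S: "S > 0"
  proof -
    obtain j where j: "x $ j \<noteq> 0" using assms(1) by (auto simp: vec_eq_iff)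
    have "\<bar>x $ j\<bar> powr r \<le> S" unfolding S_def by (rule member_le_sum) auto
    moreover have "\<bar>x $ j\<bar> powr r > 0" using j by simp
    ultimately show ?thesis by linarith
  qed
  text \<open>The comparison of \<open>S\<close> with \<open>L * m powr (r - 1)\<close> flips at \<open>r = 1\<close> together with the
    sign of \<open>1 - r\<close>, so both cases yield the same inequality of logarithms.\<close>
  have "ln (L / m) \<le> (ln S - r * ln L) / (1 - r)" (is "_ \<le> ?ln_sq")
  proof (cases "r < 1")
    case True
    have "L * m powr (r - 1) \<le> S"
      using mult_powr_le_powr_of_le[OF _ le_m True]
      unfolding S_def L_sum sum_distrib_right by (intro sum_mono) auto
    hence "ln L + (r - 1) * ln m \<le> ln S"
      using L m ln_mono[of "L * m powr (r - 1)" S] by (simp add: ln_mult ln_powr)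
    hence "(ln L - ln m) * (1 - r) \<le> ln S - r * ln L" by (simp add: algebra_simps)
    thus ?thesis using True L m by (simp add: pos_le_divide_eq ln_div)
  next
    case False
    hence r: "r > 1" using assms(3) by simp
    have "S \<le> L * m powr (r - 1)"
      using powr_le_mult_powr_of_le[OF _ le_m r]
      unfolding S_def L_sum sum_distrib_right by (intro sum_mono) auto
    hence "ln S \<le> ln L + (r - 1) * ln m"
      using S L m ln_mono[of S "L * m powr (r - 1)"] by (simp add: ln_mult ln_powr)
    hence "ln S - r * ln L \<le> (ln L - ln m) * (1 - r)" by (simp add: algebra_simps)
    thus ?thesis using r L m by (simp add: neg_le_divide_eq ln_div)
  qed
  have lq: "lqnorm r x = S powr (1 / r)" by (simp add: lqnorm_def S_def)
  have "L / m = exp (ln (L / m))" using L m by simp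
  also have "\<dots> \<le> exp ?ln_sq" using \<open>ln (L / m) \<le> ?ln_sq\<close> by simp
  also have "?ln_sq = ln ((lqnorm r x / L) powr (r / (1 - r)))"
    using S L assms(2,3) by (simp add: lq ln_powr ln_div field_simps)
  also have "exp \<dots> = (lqnorm r x / L) powr (r / (1 - r))"
    by (rule exp_ln) (use S L in \<open>simp add: lq\<close>)
  finally show ?thesis unfolding L_def m_def .
qed

lemma l1norm_div_linfnorm_le_sq:
  assumes "x \<noteq> 0" and "0 \<le> q"
  shows "l1norm x / linfnorm x \<le> sq q x"
proof (cases q)
  case (real r)
  consider "r = 0" | "r = 1" | "r > 0" "r \<noteq> 1" using assms(2) real by force
  thus ?thesis
    using real l1norm_div_linfnorm_le_l0norm[OF assms(1)]
      l1norm_div_linfnorm_le_entropy_sparsity[OF assms(1)]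
      l1norm_div_linfnorm_le_sq_real[OF assms(1)]
    by cases (simp_all add: sq_def zero_ereal_def one_ereal_def)
qed (use assms(2) in \<open>simp_all add: sq_def\<close>)

lemma kernel_vector_vanishing_on:
  fixes A :: "real^'p^'n" and T :: "'p set"
  assumes "card T + CARD('n) < CARD('p)"
  shows "\<exists>y. y \<noteq> 0 \<and> A *v y = 0 \<and> (\<forall>j\<in>T. y $ j = 0)"
proof (rule ccontr)
  assume no_kernel_vector: "\<not> ?thesis"
  define W where "W = {y::real^'p. \<forall>j\<in>T. y $ j = 0}"
  have "dim W = card (- T)"
    using dim_substandard_cart[of "- T", where 'a = real] by (simp add: W_def dim_vec_eq Ball_def)
  hence dim_W: "dim W = CARD('p) - card T" by (simp add: Compl_eq_Diff_UNIV card_Diff_subset)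
  have W: "subspace W" by (auto simp: subspace_def W_def)
  have lin: "linear ((*v) A)" by (simp add: matrix_vector_mul_linear)
  have "inj_on ((*v) A) W"
    using no_kernel_vector by (subst linear_inj_on_iff_eq_0[OF lin W]) (auto simp: W_def)
  hence "dim ((*v) A ` W) = dim W"
    using dim_image_eq[OF lin] W by (simp add: span_eq_iff[THEN iffD2, OF W])
  moreover have "dim ((*v) A ` W) \<le> CARD('n)" using dim_subset_UNIV[of "(*v) A ` W"] by simp
  ultimately show False using dim_W assms by linarith
qed

definition hit_time :: "real \<Rightarrow> real \<Rightarrow> real \<Rightarrow> real" where
  "hit_time M a b = (if b > 0 then (M - a) / b else (- M - a) / b)"

lemma hit_time_pos: "\<bar>a\<bar> < M \<Longrightarrow> b \<noteq> 0 \<Longrightarrow> hit_time M a b > 0"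
  unfolding hit_time_def by (auto intro!: divide_pos_pos divide_neg_neg)

lemma abs_add_hit_time: "b \<noteq> 0 \<Longrightarrow> 0 \<le> M \<Longrightarrow> \<bar>a + hit_time M a b * b\<bar> = M"
  unfolding hit_time_def by auto

lemma abs_add_mult_le_before_hit_time:
  assumes "\<bar>a\<bar> < M" "b \<noteq> 0" "0 \<le> t" "t \<le> hit_time M a b"
  shows "\<bar>a + t * b\<bar> \<le> M"
proof (cases "b > 0")
  case True
  hence "t * b \<le> M - a" using assms(4) by (simp add: hit_time_def pos_le_divide_eq)
  moreover have "t * b \<ge> 0" using True assms(3) by simp
  ultimately show ?thesis using assms(1) by simp
next
  case False
  hence b: "b < 0" using assms(2) by simp
  hence "t * b \<ge> - M - a" using assms(4) by (simp add: hit_time_def neg_le_divide_eq)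
  moreover have "t * b \<le> 0" using b assms(3) by (simp add: mult_nonneg_nonpos)
  ultimately show ?thesis using assms(1) by simp
qed

lemma peak_set_grows_along:
  fixes x y :: "real^'p"
  assumes "x \<noteq> 0" "y \<noteq> 0" and y_peak: "\<forall>j\<in>peak_set x. y $ j = 0"
  shows "\<exists>t. peak_set x \<subset> peak_set (x + t *\<^sub>R y) \<and> x + t *\<^sub>R y \<noteq> 0"
proof -
  define M where "M = linfnorm x"
  define J where "J = {j. y $ j \<noteq> 0}"
  have M: "M > 0" using linfnorm_pos[OF assms(1)] by (simp add: M_def)
  have "J \<noteq> {}" using assms(2) by (auto simp: J_def vec_eq_iff)
  have below_peak: "\<bar>x $ j\<bar> < M" if "j \<in> J" for j
    using that y_peak abs_le_linfnorm[of x j] by (force simp: J_def M_def peak_set_def)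
  define t where "t = Min ((\<lambda>j. hit_time M (x $ j) (y $ j)) ` J)"
  have "t \<in> (\<lambda>j. hit_time M (x $ j) (y $ j)) ` J"
    unfolding t_def using \<open>J \<noteq> {}\<close> by (intro Min_in) auto
  then obtain k where k: "k \<in> J" and t_k: "t = hit_time M (x $ k) (y $ k)" by blast
  have t: "t > 0" using hit_time_pos[OF below_peak[OF k]] k by (simp add: t_k J_def)
  define x' where "x' = x + t *\<^sub>R y"
  have "\<bar>x' $ j\<bar> \<le> M" for j
  proof (cases "j \<in> J")
    case True
    have "t \<le> hit_time M (x $ j) (y $ j)" using True by (simp add: t_def)
    thus ?thesis
      using abs_add_mult_le_before_hit_time[OF below_peak[OF True]] True t
      by (simp add: x'_def J_def)
  qed (use abs_le_linfnorm[of x j] in \<open>simp add: x'_def J_def M_def\<close>)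
  moreover have x'_k: "\<bar>x' $ k\<bar> = M"
    using abs_add_hit_time[of "y $ k" M "x $ k"] k M by (simp add: x'_def t_k J_def)
  ultimately have linf_x': "linfnorm x' = M" by (rule linfnorm_eqI)
  have "peak_set x \<subseteq> peak_set x'"
    unfolding peak_set_def linf_x' using y_peak by (auto simp: x'_def M_def peak_set_def)
  moreover have "k \<notin> peak_set x" using below_peak[OF k] by (simp add: peak_set_def M_def)
  moreover have "k \<in> peak_set x'" using x'_k by (simp add: peak_set_def linf_x')
  moreover have "x' \<noteq> 0" using x'_k M by auto
  ultimately show ?thesis unfolding x'_def by blast
qed

lemma solution_with_large_peak_set:
  fixes A :: "real^'p^'n" and x0 :: "real^'p"
  assumes "CARD('n) < CARD('p)"
  shows "\<exists>x. x \<noteq> 0 \<and> A *v x = A *v x0 \<and> CARD('p) - CARD('n) \<le> card (peak_set x)"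
proof -
  define solution where "solution x \<longleftrightarrow> x \<noteq> 0 \<and> A *v x = A *v x0" for x
  have "\<exists>x. solution x"
  proof (cases "x0 = 0")
    case True
    obtain y :: "real^'p" where "y \<noteq> 0" "A *v y = 0"
      using kernel_vector_vanishing_on[of "{}" A] assms by auto
    thus ?thesis using True by (auto simp: solution_def)
  qed (auto simp: solution_def)
  moreover have "\<forall>x. solution x \<longrightarrow> card (peak_set x) < Suc CARD('p)"
    by (simp add: less_Suc_eq_le card_mono)
  ultimately obtain x where x: "solution x"
    and x_max: "\<And>x'. solution x' \<Longrightarrow> card (peak_set x') \<le> card (peak_set x)"
    using ex_has_greatest_nat[of solution _ "\<lambda>x. card (peak_set x)"] by metis
  have "CARD('p) - CARD('n) \<le> card (peak_set x)"
  proof (rule ccontr)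
    assume "\<not> ?thesis"
    hence "card (peak_set x) + CARD('n) < CARD('p)" by linarith
    then obtain y where "y \<noteq> 0" "A *v y = 0" "\<forall>j\<in>peak_set x. y $ j = 0"
      using kernel_vector_vanishing_on[of "peak_set x" A] by auto
    moreover from this obtain t
      where "peak_set x \<subset> peak_set (x + t *\<^sub>R y)" "x + t *\<^sub>R y \<noteq> 0"
      using peak_set_grows_along x by (metis solution_def)
    ultimately have "solution (x + t *\<^sub>R y)"
      and "card (peak_set x) < card (peak_set (x + t *\<^sub>R y))"
      using x by (auto simp: solution_def psubset_card_mono matrix_vector_right_distrib
          matrix_vector_mult_scaleR)
    thus False using x_max by fastforce
  qed
  thus ?thesis using x by (auto simp: solution_def)
qed

lemma two_le_pi_mult_exp_1: "2 \<le> pi * exp 1"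
proof -
  have "1 * 2 \<le> pi * exp 1"
    using pi_gt3 exp_ge_add_one_self[of 1] by (intro mult_mono) auto
  thus ?thesis by simp
qed

lemma sparsity_bound_small_q_le:
  fixes P N :: real
  assumes "0 \<le> N" "N < P"
  shows "1 / (pi * exp 1) * (1 - N / P)^2 * P \<le> P - N"
proof -
  have P: "P > 0" using assms by linarith
  have "(1 - N / P)^2 * P = (P - N) * ((P - N) / P)"
    using P by (simp add: power2_eq_square field_simps)
  also have "\<dots> \<le> (P - N) * 1" using assms P by (intro mult_left_mono) auto
  finally have "1 / (pi * exp 1) * ((1 - N / P)^2 * P) \<le> 1 * (P - N)"
    using two_le_pi_mult_exp_1 P by (intro mult_mono) auto
  thus ?thesis by (simp add: mult.assoc)
qed

lemma sparsity_bound_large_q_le: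
  fixes P N :: real
  assumes "N < P" "1 \<le> P"
  shows "sqrt (2 / (pi * exp 1)) * (P - N) / (1 + sqrt (16 * ln (2 * P))) \<le> P - N"
proof -
  have "sqrt (2 / (pi * exp 1)) * (P - N) \<le> 1 * (P - N)"
    using two_le_pi_mult_exp_1 assms(1) by (intro mult_right_mono) auto
  also have "\<dots> \<le> (P - N) * (1 + sqrt (16 * ln (2 * P)))"
    using assms by simp
  finally show ?thesis
    using assms(2) by (simp add: pos_divide_le_eq add_pos_nonneg)
qed

theorem lemma3:
  fixes A :: "real^'p^'n" and x0 :: "real^'p"
  assumes "CARD('n) < CARD('p)"
  shows "(\<forall>q::ereal. 0 \<le> q \<and> q \<le> 2 \<longrightarrow>
            (\<exists>x::real^'p. x \<noteq> 0 \<and> A *v x = A *v x0 \<and>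
               sq q x \<ge> 1 / (pi * exp 1) * (1 - real CARD('n) / real CARD('p))^2
                          * real CARD('p)))
       \<and> (\<forall>q::ereal. 2 < q \<longrightarrow>
            (\<exists>x::real^'p. x \<noteq> 0 \<and> A *v x = A *v x0 \<and>
               sq q x \<ge> sqrt (2 / (pi * exp 1)) * (real CARD('p) - real CARD('n))
                          / (1 + sqrt (16 * ln (2 * real CARD('p))))))"
proof -
  obtain x where x: "x \<noteq> 0" "A *v x = A *v x0"
    and peak: "CARD('p) - CARD('n) \<le> card (peak_set x)"
    using solution_with_large_peak_set[OF assms] by blast
  have "real CARD('p) - real CARD('n) \<le> sq q x" if "0 \<le> q" for q
  proof -
    have "real CARD('p) - real CARD('n) \<le> real (card (peak_set x))"
      using peak assms by (simp add: of_nat_diff)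
    thus ?thesis
      using card_peak_set_le_l1norm_div_linfnorm[OF x(1)]
        l1norm_div_linfnorm_le_sq[OF x(1) that] by linarith
  qed
  moreover have "0 \<le> q" if "2 < q" for q :: ereal using that by (cases q) auto
  moreover have "real CARD('n) < real CARD('p)" "1 \<le> real CARD('p)" using assms by simp_all
  ultimately show ?thesis
    using x sparsity_bound_small_q_le[of "real CARD('n)" "real CARD('p)"]
      sparsity_bound_large_q_le[of "real CARD('n)" "real CARD('p)"]
    by (meson order_trans of_nat_0_le_iff)
qed

end
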